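(* Consider Algorithm SAVIC (described in the context) run with heterogeneous data and $M\ge2$. Suppose: (i) each $f_m$ is $\mu$-strongly convex and $L$-smooth; (ii) each $f_m(\cdot,z)$ is almost surely $L$-smooth and $\mu$-strongly convex; (iii) there are constants $0<\alpha\le\Gamma$ with $\alpha I\preceq D^0\preceq\Gamma I$ and $\alpha I\preceq H^t\preceq\Gamma I$ for all $t$. Then for any $\gamma\ge0$ and any $t$ with $t_p\le t\le t_{p+1}-1$, $$\mathbb E\|\hat x_{t+1}-x_*\|^2_{\hat D^{t_p}}\le\left(1-\frac{\gamma\mu}{\Gamma}\right)\|\hat x_t-x_*\|^2_{\hat D^{t_p}}+\frac{\gamma L}{\alpha}\left(1+\frac{2\gamma L}{\alpha}\right)V_t-2\gamma\left(1-\frac{4\gamma L}{\alpha}\right)D_f(\hat x_t,x_* )+\frac{4\gamma^2\sigma_{\mathrm{dif}}^2}{M\alpha}.$$ In particular, if $\gamma\le\frac{\alpha}{8L}$, then $$\mathbb E\|\hat x_{t+1}-x_*\|^2_{\hat D^{t_p}}\le\left(1-\frac{\gamma\mu}{\Gamma}\right)\|\hat x_t-x_*\|^2_{\hat D^{t_p}}+\frac{5\gamma L}{4\alpha}V_t-\gamma D_f(\hat x_t,x_* )+\frac{4\gamma^2\sigma_{\mathrm{dif}}^2}{M\alpha}.$$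
   Context: Problem: minimize $f(x)=\frac1M\sum_mf_m(x)$ over $\mathbb R^d$, $f_m(x)=\mathbb E_{z\sim\mathcal D_m}[f_m(x,z)]$, $x_*$ the solution; $\mu$-strong convexity and $L$-smoothness: $\frac{\mu}{2}\|x-y\|^2\le g(x)-g(y)-\langle\nabla g(y),x-y\rangle\le\frac{L}{2}\|x-y\|^2$. $\sigma_{\mathrm{dif}}^2=\frac1M\sum_m\mathbb E_{z_m\sim\mathcal D_m}\|\nabla f_m(x_*,z_m)\|^2$. $D_f(x,y)=f(x)-f(y)-\langle\nabla f(y),x-y\rangle$. $\|x\|_A^2=\langle x,Ax\rangle$. Preconditioner: diagonal $D^t$ from diagonal $D^0,H^t$ via $(D^t)^2=\beta_t(D^{t-1})^2+(1-\beta_t)(H^t)^2$ or $D^t=\beta_tD^{t-1}+(1-\beta_t)H^t$, $\beta_t\in[0,1]$; $(\hat D^t)_{ii}=\max\{\alpha,|D^t_{ii}|\}$. Algorithm SAVIC: stepsize $\gamma$, $x_0^m=x_0$, synchronization times $t_0=0<t_1<\dots$; at $t=t_p$ the matrix $\hat D^{t_p}$ is updated and used by all clients for $t_p\le t<t_{p+1}$; client $m$ samples $z_m\sim\mathcal D_m$ i.i.d. with $\mathbb E[\nabla f_m(x_t^m,z_m)\mid x_t^m]=\nabla f_m(x_t^m)$, and sets $x_{t+1}^m=\frac1M\sum_j(x_t^j-\gamma(\hat D^{t_p})^{-1}\nabla f_j(x_t^j,z_j))$ if $t=t_p$ for some $p$, else $x_{t+1}^m=x_t^m-\gamma(\hat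 D^{t_p})^{-1}\nabla f_m(x_t^m,z_m)$. Notation: $\hat x_t=\frac1M\sum_mx_t^m$; $V_t=\frac1M\sum_m\|x_t^m-\hat x_t\|^2_{\hat D^{t_p}}$ for $t_p\le t<t_{p+1}$. *)

theory Defs
  imports "HOL-Probability.Probability"
begin

definition sc_smooth :: "real \<Rightarrow> real \<Rightarrow> ('a::real_inner \<Rightarrow> real) \<Rightarrow> ('a \<Rightarrow> 'a) \<Rightarrow> bool" where
  "sc_smooth \<mu> L g G \<longleftrightarrow>
     (\<forall>x. (g has_derivative (\<lambda>h. G x \<bullet> h)) (at x)) \<and>
     (\<forall>x y. \<mu> / 2 * (norm (x - y))^2 \<le> g x - g y - G y \<bullet> (x - y) \<and>
            g x - g y - G y \<bullet> (x - y) \<le> L / 2 * (norm (x - y))^2)"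

text \<open>Diagonal matrices are represented by their diagonal vectors.\<close>
definition dnorm2 :: "real^'n \<Rightarrow> real^'n \<Rightarrow> real" where
  "dnorm2 A v = (\<Sum>i\<in>UNIV. A $ i * (v $ i)^2)"

definition dinv :: "real^'n \<Rightarrow> real^'n \<Rightarrow> real^'n" where
  "dinv A v = (\<chi> i. v $ i / A $ i)"

fun precond :: "bool \<Rightarrow> (nat \<Rightarrow> real) \<Rightarrow> real^'n \<Rightarrow> (nat \<Rightarrow> real^'n) \<Rightarrow> nat \<Rightarrow> real^'n" where
  "precond sq \<beta> D0 H 0 = D0"
| "precond sq \<beta> D0 H (Suc t) =
     (if sq then (\<chi> i. sqrt (\<beta> (Suc t) * (precond sq \<beta> D0 H t $ i)^2 + (1 - \<beta> (Suc t)) * (H (Suc t) $ i)^2))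
      else (\<chi> i. \<beta> (Suc t) * precond sq \<beta> D0 H t $ i + (1 - \<beta> (Suc t)) * H (Suc t) $ i))"

definition clip :: "real \<Rightarrow> real^'n \<Rightarrow> real^'n" where
  "clip \<alpha> D = (\<chi> i. max \<alpha> \<bar>D $ i\<bar>)"

text \<open>One SAVIC step for client m: given current iterates xs j, sampled stochastic gradients gs j,
  preconditioner Dh, and whether the current time is a synchronization time.\<close>
definition savic_next :: "real \<Rightarrow> real^'n \<Rightarrow> nat \<Rightarrow> bool \<Rightarrow> (nat \<Rightarrow> real^'n) \<Rightarrow> (nat \<Rightarrow> real^'n) \<Rightarrow> nat \<Rightarrow> real^'n" where
  "savic_next \<gamma> Dh M sync xs gs m =
     (if sync then (1 / real M) *\<^sub>R (\<Sum>j<M. xs j - \<gamma> *\<^sub>R dinv Dh (gs j))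
      else xs m - \<gamma> *\<^sub>R dinv Dh (gs m))"

definition avg :: "nat \<Rightarrow> (nat \<Rightarrow> real^'n) \<Rightarrow> real^'n" where
  "avg M xs = (1 / real M) *\<^sub>R (\<Sum>m<M. xs m)"

end

theory Submission
  imports Defs
begin

(* Whether or not t is a synchronization time, the average of the iterates moves by
   -gamma D^-1 g, where g is the average of the sampled gradients g_m(x_m) and D is the
   preconditioner, which stays in [alpha, Gamma] so that clipping is inactive. Hence, with
   u = xh - xstar,
     ||xh' - xstar||_D^2 <= ||u||_D^2 - 2 gamma <u, g> + gamma^2/alpha ||g||^2.
   In expectation <u, g> becomes the average of <u, grad f_m(x_m)>, which strong convexity and
   smoothness of f_m at x_m bound below by f(xh) - f(xstar) + mu/2 ||u||^2 - L/2 S, where S is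
   the Euclidean consensus error. For ||g||^2 split every g_m(x_m) as
     (g_m(x_m) - g_m(xh)) + (g_m(xh) - g_m(xstar)) + g_m(xstar):
   the first part is controlled by L-Lipschitz gradients, the second by cocoercivity in terms of
   the Bregman divergence D_f(xh, xstar), and the third is a sum of independent vectors whose
   means grad f_m(xstar) add up to 0 by optimality of xstar, so its second moment is at most
   M sigma_dif^2. *)

definition bregman :: "('a::real_inner \<Rightarrow> real) \<Rightarrow> ('a \<Rightarrow> 'a) \<Rightarrow> 'a \<Rightarrow> 'a \<Rightarrow> real" where
  "bregman g G x y = g x - g y - G y \<bullet> (x - y)"

section \<open>Strongly convex smooth functions\<close>

lemma sc_smooth_bregman_bounds:
  assumes "sc_smooth \<mu> L g G"
  shows "\<mu> / 2 * (norm (x - y))^2 \<le> bregman g G x y" "bregman g G x y \<le> L / 2 * (norm (x - y))^2"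
  using assms unfolding sc_smooth_def bregman_def by blast+

lemma sc_smooth_bregman_nonneg:
  assumes "sc_smooth \<mu> L g G" "0 \<le> \<mu>"
  shows "0 \<le> bregman g G x y"
proof -
  have "0 \<le> \<mu> / 2 * (norm (x - y))^2" using assms(2) by simp
  then show ?thesis using sc_smooth_bregman_bounds(1)[OF assms(1)] by (rule order_trans)
qed

lemma sc_smooth_modulus_le:
  fixes g :: "'a::euclidean_space \<Rightarrow> real"
  assumes "sc_smooth \<mu> L g G"
  shows "\<mu> \<le> L"
proof -
  obtain b :: 'a where "b \<in> Basis" using nonempty_Basis by blast
  then have "0 < (norm (b - 0))^2" by auto
  moreover have "\<mu> / 2 * (norm (b - 0))^2 \<le> L / 2 * (norm (b - 0))^2"
    using sc_smooth_bregman_bounds[OF assms, of b 0] by linarith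
  ultimately show ?thesis by (simp add: mult_le_cancel_right)
qed

lemma sc_smooth_cocoercive:
  assumes sc: "sc_smooth \<mu> L g G" and \<mu>: "0 \<le> \<mu>" and L: "0 < L"
  shows "(norm (G x - G y))^2 \<le> 2 * L * bregman g G x y"
proof -
  define d where "d = G x - G y"
  define z where "z = x - (1 / L) *\<^sub>R d"
  have "bregman g G z y = bregman g G z x + bregman g G x y + d \<bullet> (z - x)"
    by (simp add: bregman_def d_def inner_diff_left inner_diff_right algebra_simps)
  moreover have "d \<bullet> (z - x) = - ((norm d)^2 / L)"
    by (simp add: z_def power2_norm_eq_inner)
  moreover have "bregman g G z x \<le> (norm d)^2 / (2 * L)"
    using sc_smooth_bregman_bounds(2)[OF sc, of z x] L
    by (simp add: z_def power_divide power2_eq_square)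
  moreover have "0 \<le> bregman g G z y" by (rule sc_smooth_bregman_nonneg[OF sc \<mu>])
  ultimately have "(norm d)^2 / (2 * L) \<le> bregman g G x y" by (simp add: field_simps)
  then show ?thesis using L by (simp add: d_def field_simps)
qed

lemma sc_smooth_grad_lipschitz:
  assumes sc: "sc_smooth \<mu> L g G" and "0 \<le> \<mu>" and L: "0 < L"
  shows "(norm (G x - G y))^2 \<le> L^2 * (norm (x - y))^2"
proof -
  have "(norm (G x - G y))^2 \<le> 2 * L * bregman g G x y"
    by (rule sc_smooth_cocoercive[OF assms])
  also have "\<dots> \<le> 2 * L * (L / 2 * (norm (x - y))^2)"
    using sc_smooth_bregman_bounds(2)[OF sc] L by (intro mult_left_mono) auto
  finally show ?thesis by (simp add: power2_eq_square)
qed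

lemma smooth_minimizer_grad_eq_0:
  fixes g :: "'a::real_inner \<Rightarrow> real"
  assumes smooth: "\<And>x. bregman g G x y \<le> L / 2 * (norm (x - y))^2" and L: "0 < L"
    and min: "\<And>x. g y \<le> g x"
  shows "G y = 0"
proof -
  define x where "x = y - (1 / L) *\<^sub>R G y"
  have "0 \<le> g x - g y" using min[of x] by simp
  also have "\<dots> \<le> G y \<bullet> (x - y) + L / 2 * (norm (x - y))^2"
    using smooth[of x] by (simp add: bregman_def)
  also have "\<dots> = - ((norm (G y))^2 / L) + L / 2 * ((norm (G y))^2 / L^2)"
    using L by (simp add: x_def dot_square_norm power_mult_distrib power_divide)
  also have "\<dots> = - ((norm (G y))^2 / (2 * L))"
    using L by (simp add: power2_eq_square field_simps)
  finally show ?thesis using L by (simp add: divide_le_0_iff)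
qed

lemma bregman_sum:
  "bregman (\<lambda>x. \<Sum>i\<in>I. g i x) (\<lambda>x. \<Sum>i\<in>I. G i x) x y = (\<Sum>i\<in>I. bregman (g i) (G i) x y)"
  by (simp add: bregman_def sum_subtractf inner_sum_left)

lemma sum_grad_eq_0_at_minimizer:
  fixes M :: nat
  assumes sc: "\<And>m. m < M \<Longrightarrow> sc_smooth \<mu> L (F m) (Gr m)" and L: "0 < L" and M: "0 < M"
    and min: "\<And>x. (\<Sum>m<M. F m y) \<le> (\<Sum>m<M. F m x)"
  shows "(\<Sum>m<M. Gr m y) = 0"
proof (rule smooth_minimizer_grad_eq_0[where g = "\<lambda>x. \<Sum>m<M. F m x" and G = "\<lambda>x. \<Sum>m<M. Gr m x"
      and L = "real M * L"])
  fix x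
  have "(\<Sum>m<M. bregman (F m) (Gr m) x y) \<le> (\<Sum>m<M. L / 2 * (norm (x - y))^2)"
    using sc_smooth_bregman_bounds(2)[OF sc] by (intro sum_mono) auto
  then show "bregman (\<lambda>x. \<Sum>m<M. F m x) (\<lambda>x. \<Sum>m<M. Gr m x) x y \<le> real M * L / 2 * (norm (x - y))^2"
    by (simp add: bregman_sum)
qed (use L M min in auto)

section \<open>Averages and diagonal norms\<close>

lemma norm_avg_power2_le:
  fixes v :: "nat \<Rightarrow> 'a::real_inner"
  assumes M: "0 < M"
  shows "(norm ((1 / real M) *\<^sub>R (\<Sum>m<M. v m)))^2 \<le> (1 / real M) * (\<Sum>m<M. (norm (v m))^2)"
proof -
  define c where "c = (1 / real M) *\<^sub>R (\<Sum>m<M. v m)"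
  have sum_eq: "(\<Sum>m<M. v m) = real M *\<^sub>R c" using M by (simp add: c_def)
  have "0 \<le> (\<Sum>m<M. (norm (v m - c))^2)" by (simp add: sum_nonneg)
  also have "\<dots> = (\<Sum>m<M. (norm (v m))^2 - 2 * (v m \<bullet> c) + (norm c)^2)"
    by (rule sum.cong) (auto simp: power2_norm_eq_inner inner_diff_left inner_diff_right inner_commute)
  also have "\<dots> = (\<Sum>m<M. (norm (v m))^2) - 2 * ((\<Sum>m<M. v m) \<bullet> c) + real M * (norm c)^2"
    by (simp add: sum.distrib sum_subtractf sum_distrib_left inner_sum_left)
  also have "\<dots> = (\<Sum>m<M. (norm (v m))^2) - real M * (norm c)^2"
    by (simp add: sum_eq power2_norm_eq_inner)
  finally show ?thesis using M unfolding c_def[symmetric] by (simp add: field_simps)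
qed

lemma norm_add_power2_le:
  fixes x y :: "'a::real_normed_vector"
  shows "(norm (x + y))^2 \<le> 2 * (norm x)^2 + 2 * (norm y)^2"
proof -
  have "(norm (x + y))^2 \<le> (norm x + norm y)^2" by (simp add: norm_triangle_ineq power_mono)
  also have "\<dots> \<le> 2 * (norm x)^2 + 2 * (norm y)^2"
    using zero_le_power2[of "norm x - norm y"] by (simp add: power2_eq_square algebra_simps)
  finally show ?thesis .
qed

lemma avg_diff_const:
  assumes "0 < M"
  shows "(1 / real M) *\<^sub>R (\<Sum>m<M. x m - c) = avg M x - c"
  using assms unfolding avg_def sum_subtractf sum_constant_scaleR scaleR_diff_right by simp

lemma norm_power2_vec: "(norm (v::real^'n))^2 = (\<Sum>i\<in>UNIV. (v $ i)^2)"
  unfolding power2_norm_eq_inner inner_vec_def by (simp add: power2_eq_square)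

lemma dnorm2_ge:
  assumes "\<And>i. a \<le> D $ i"
  shows "a * (norm v)^2 \<le> dnorm2 D v"
  unfolding dnorm2_def norm_power2_vec sum_distrib_left
  by (auto intro!: sum_mono mult_right_mono assms)

lemma dnorm2_le:
  assumes "\<And>i. D $ i \<le> b"
  shows "dnorm2 D v \<le> b * (norm v)^2"
  unfolding dnorm2_def norm_power2_vec sum_distrib_left
  by (auto intro!: sum_mono mult_right_mono assms)

lemma avg_dnorm2_ge:
  assumes "\<And>i. a \<le> D $ i"
  shows "a * ((1 / real M) * (\<Sum>m<M. (norm (v m))^2)) \<le> (1 / real M) * (\<Sum>m<M. dnorm2 D (v m))"
proof -
  have "a * ((1 / real M) * (\<Sum>m<M. (norm (v m))^2)) = (1 / real M) * (\<Sum>m<M. a * (norm (v m))^2)"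
    by (simp add: sum_distrib_left)
  also have "\<dots> \<le> (1 / real M) * (\<Sum>m<M. dnorm2 D (v m))"
    using dnorm2_ge[OF assms] by (intro mult_left_mono sum_mono) auto
  finally show ?thesis .
qed

lemma dnorm2_diff_dinv_le:
  assumes a: "0 < a" and D: "\<And>i. a \<le> D $ i"
  shows "dnorm2 D (u - c *\<^sub>R dinv D g) \<le> dnorm2 D u - 2 * c * (u \<bullet> g) + c^2 / a * (norm g)^2"
proof -
  have D0: "D $ i \<noteq> 0" for i using D[of i] a by linarith
  have "dnorm2 D (u - c *\<^sub>R dinv D g)
      = (\<Sum>i\<in>UNIV. D $ i * (u $ i)^2 - 2 * c * (u $ i * g $ i) + c^2 * ((g $ i)^2 / D $ i))"
    unfolding dnorm2_def dinv_def using D0 by (intro sum.cong refl) (simp add: field_simps power2_eq_square)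
  also have "\<dots> = dnorm2 D u - 2 * c * (u \<bullet> g) + c^2 * (\<Sum>i\<in>UNIV. (g $ i)^2 / D $ i)"
    by (simp add: sum.distrib sum_subtractf sum_distrib_left dnorm2_def inner_vec_def)
  also have "(\<Sum>i\<in>UNIV. (g $ i)^2 / D $ i) \<le> (norm g)^2 / a"
    unfolding norm_power2_vec sum_divide_distrib using a D by (intro sum_mono) (simp add: frac_le)
  finally show ?thesis by (simp add: mult_left_mono)
qed

section \<open>The preconditioner and the averaged step\<close>

lemma convex_comb_between:
  fixes a b x y u :: real
  assumes "a \<le> x" "x \<le> b" "a \<le> y" "y \<le> b" "0 \<le> u" "u \<le> 1"
  shows "a \<le> u * x + (1 - u) * y \<and> u * x + (1 - u) * y \<le> b"
  using convex_bound_le[of x b y u "1 - u"] convex_bound_le[of "- x" "- a" "- y" u "1 - u"] assms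
  by auto

lemma precond_bounds:
  assumes \<alpha>: "0 \<le> \<alpha>" and D0: "\<And>i. \<alpha> \<le> D0 $ i \<and> D0 $ i \<le> \<Gamma>"
    and H: "\<And>s i. \<alpha> \<le> H s $ i \<and> H s $ i \<le> \<Gamma>" and \<beta>: "\<And>s. 0 \<le> \<beta> s \<and> \<beta> s \<le> 1"
  shows "\<alpha> \<le> precond sq \<beta> D0 H t $ i \<and> precond sq \<beta> D0 H t $ i \<le> \<Gamma>"
proof (induction t arbitrary: i)
  case 0
  then show ?case using D0 by simp
next
  case (Suc t)
  let ?p = "precond sq \<beta> D0 H t $ i" and ?h = "H (Suc t) $ i" and ?b = "\<beta> (Suc t)"
  have p: "\<alpha> \<le> ?p" "?p \<le> \<Gamma>" and h: "\<alpha> \<le> ?h" "?h \<le> \<Gamma>" and b: "0 \<le> ?b" "?b \<le> 1"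
    using Suc H \<beta> by auto
  show ?case
  proof (cases sq)
    case True
    have "\<alpha>^2 \<le> ?p^2" "?p^2 \<le> \<Gamma>^2" "\<alpha>^2 \<le> ?h^2" "?h^2 \<le> \<Gamma>^2"
      using p h \<alpha> by (auto intro: power_mono)
    then have "\<alpha>^2 \<le> ?b * ?p^2 + (1 - ?b) * ?h^2 \<and> ?b * ?p^2 + (1 - ?b) * ?h^2 \<le> \<Gamma>^2"
      using b by (intro convex_comb_between) auto
    then show ?thesis
      using True \<alpha> p by (simp add: real_le_rsqrt real_le_lsqrt)
  next
    case False
    then show ?thesis using p h b by (simp add: convex_comb_between)
  qed
qed

lemma clip_eq_self:
  assumes "0 \<le> \<alpha>" "\<And>i. \<alpha> \<le> D $ i"
  shows "clip \<alpha> D = D"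
proof -
  have "max \<alpha> \<bar>D $ i\<bar> = D $ i" for i
    using assms(1) assms(2)[of i] by (simp add: max_def)
  then show ?thesis by (simp add: clip_def vec_eq_iff)
qed

lemma clip_precond:
  assumes "0 \<le> \<alpha>" "\<And>i. \<alpha> \<le> D0 $ i \<and> D0 $ i \<le> \<Gamma>"
    "\<And>s i. \<alpha> \<le> H s $ i \<and> H s $ i \<le> \<Gamma>" "\<And>s. 0 \<le> \<beta> s \<and> \<beta> s \<le> 1"
  shows "clip \<alpha> (precond sq \<beta> D0 H t) = precond sq \<beta> D0 H t"
  using precond_bounds[OF assms] assms(1) by (intro clip_eq_self) auto

lemma avg_const:
  assumes "0 < M"
  shows "avg M (\<lambda>_. c) = c"
  using assms unfolding avg_def sum_constant_scaleR by simp

lemma avg_savic_next: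
  assumes M: "0 < M"
  shows "avg M (savic_next \<gamma> D M sync x g) = avg M x - \<gamma> *\<^sub>R dinv D (avg M g)"
proof -
  have dinv_sum: "dinv D (\<Sum>m<M. g m) = (\<Sum>m<M. dinv D (g m))"
    by (simp add: dinv_def vec_eq_iff sum_divide_distrib)
  have dinv_scale: "dinv D (c *\<^sub>R v) = c *\<^sub>R dinv D v" for c v
    by (simp add: dinv_def vec_eq_iff)
  have avg_step: "(1 / real M) *\<^sub>R (\<Sum>j<M. x j - \<gamma> *\<^sub>R dinv D (g j)) = avg M x - \<gamma> *\<^sub>R dinv D (avg M g)"
    by (simp add: avg_def sum_subtractf scaleR_sum_right[symmetric] dinv_sum dinv_scale scaleR_diff_right)
  show ?thesis
  proof (cases sync)
    case True
    then have "savic_next \<gamma> D M sync x g = (\<lambda>_. (1 / real M) *\<^sub>R (\<Sum>j<M. x j - \<gamma> *\<^sub>R dinv D (g j)))"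
      by (simp add: savic_next_def fun_eq_iff)
    then show ?thesis using avg_step by (simp add: avg_const[OF M])
  next
    case False
    then show ?thesis using avg_step by (simp add: savic_next_def avg_def)
  qed
qed

section \<open>Independent coordinates of a product of probability spaces\<close>

lemma
  fixes h :: "'z \<Rightarrow> 'b::{banach,second_countable_topology}"
  assumes P: "\<And>i. i \<in> I \<Longrightarrow> prob_space (N i)" and m: "m \<in> I" and h: "integrable (N m) h"
  shows integrable_PiM_component: "integrable (PiM I N) (\<lambda>\<omega>. h (\<omega> m))"
    and integral_PiM_component: "(\<integral>\<omega>. h (\<omega> m) \<partial>PiM I N) = integral\<^sup>L (N m) h"
proof -
  have distr: "distr (PiM I N) (N m) (\<lambda>\<omega>. \<omega> m) = N m"
    by (rule distr_PiM_component[OF P m])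
  have meas: "(\<lambda>\<omega>. \<omega> m) \<in> measurable (PiM I N) (N m)"
    using m by (rule measurable_component_singleton)
  have h_meas: "h \<in> borel_measurable (N m)" using h by auto
  show "integrable (PiM I N) (\<lambda>\<omega>. h (\<omega> m))"
    using integrable_distr_eq[OF meas h_meas] h distr by simp
  show "(\<integral>\<omega>. h (\<omega> m) \<partial>PiM I N) = integral\<^sup>L (N m) h"
    using integral_distr[OF meas h_meas] distr by simp
qed

lemma
  fixes h :: "'i \<Rightarrow> 'z \<Rightarrow> 'b::{banach,second_countable_topology}"
  assumes P: "\<And>i. i \<in> I \<Longrightarrow> prob_space (N i)" and I: "finite I"
    and h: "\<And>i. i \<in> I \<Longrightarrow> integrable (N i) (h i)"
  shows integrable_PiM_sum_components: "integrable (PiM I N) (\<lambda>\<omega>. \<Sum>i\<in>I. h i (\<omega> i))"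
    and integral_PiM_sum_components:
      "(\<integral>\<omega>. (\<Sum>i\<in>I. h i (\<omega> i)) \<partial>PiM I N) = (\<Sum>i\<in>I. integral\<^sup>L (N i) (h i))"
proof -
  have "integrable (PiM I N) (\<lambda>\<omega>. h i (\<omega> i))" if "i \<in> I" for i
    by (intro integrable_PiM_component[where I = I and N = N] P that h)
  then show "integrable (PiM I N) (\<lambda>\<omega>. \<Sum>i\<in>I. h i (\<omega> i))"
    "(\<integral>\<omega>. (\<Sum>i\<in>I. h i (\<omega> i)) \<partial>PiM I N) = (\<Sum>i\<in>I. integral\<^sup>L (N i) (h i))"
    using integral_PiM_component[where I = I and N = N, OF P _ h] by (auto simp: Bochner_Integration.integral_sum)
qed

lemma
  fixes f g :: "'z \<Rightarrow> real"
  assumes N_prob: "\<And>i. i \<in> I \<Longrightarrow> prob_space (N i)" and I: "finite I"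
    and ij: "i \<in> I" "j \<in> I" "i \<noteq> j" and f: "integrable (N i) f" and g: "integrable (N j) g"
  shows integrable_PiM_mult_components: "integrable (PiM I N) (\<lambda>\<omega>. f (\<omega> i) * g (\<omega> j))"
    and integral_PiM_mult_components:
      "(\<integral>\<omega>. f (\<omega> i) * g (\<omega> j) \<partial>PiM I N) = integral\<^sup>L (N i) f * integral\<^sup>L (N j) g"
proof -
  \<comment> \<open>Extend the family outside I so that it becomes a product probability space.\<close>
  define N' where "N' k = (if k \<in> I then N k else return (count_space UNIV) undefined)" for k
  have N'_prob: "prob_space (N' k)" for k using N_prob by (auto simp: N'_def intro: prob_space_return)
  then interpret product_prob_space N'
    by (metis product_prob_space.intro product_prob_space_axioms.intro product_sigma_finite.intro
        prob_space_imp_sigma_finite)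
  have PiM_eq: "PiM I N = PiM I N'" by (rule PiM_cong) (auto simp: N'_def)
  define h where "h k = (if k = i then f else if k = j then g else (\<lambda>_. 1))" for k
  have h: "integrable (N' k) (h k)" if "k \<in> I" for k
  proof -
    interpret prob_space "N k" using N_prob that by auto
    show ?thesis using f g that by (auto simp: h_def N'_def)
  qed
  have prod_h: "(\<Prod>k\<in>I. c k (h k)) = c i f * c j g" if "\<And>k. c k (\<lambda>_. 1) = 1" for c :: "_ \<Rightarrow> _ \<Rightarrow> real"
  proof -
    have "(\<Prod>k\<in>I. c k (h k)) = (\<Prod>k\<in>I. (if k = i then c i f else 1) * (if k = j then c j g else 1))"
      using ij that by (intro prod.cong) (auto simp: h_def)
    then show ?thesis using I ij by (simp add: prod.distrib prod.delta)
  qed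
  have prod_at: "(\<Prod>k\<in>I. h k (\<omega> k)) = f (\<omega> i) * g (\<omega> j)" for \<omega>
    using prod_h[of "\<lambda>k u. u (\<omega> k)"] by simp
  show "integrable (PiM I N) (\<lambda>\<omega>. f (\<omega> i) * g (\<omega> j))"
    using product_integrable_prod[OF I h] unfolding PiM_eq prod_at by simp
  have "(\<integral>\<omega>. f (\<omega> i) * g (\<omega> j) \<partial>PiM I N) = (\<Prod>k\<in>I. integral\<^sup>L (N' k) (h k))"
    using product_integral_prod[OF I h] unfolding PiM_eq prod_at by simp
  also have "\<dots> = integral\<^sup>L (N' i) f * integral\<^sup>L (N' j) g"
    using N'_prob by (intro prod_h) (simp add: prob_space.prob_space)
  finally show "(\<integral>\<omega>. f (\<omega> i) * g (\<omega> j) \<partial>PiM I N) = integral\<^sup>L (N i) f * integral\<^sup>L (N j) g"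
    using ij by (simp add: N'_def)
qed

lemma
  fixes X Y :: "'z \<Rightarrow> 'b::euclidean_space"
  assumes P: "\<And>i. i \<in> I \<Longrightarrow> prob_space (N i)" and I: "finite I"
    and ij: "i \<in> I" "j \<in> I" "i \<noteq> j" and X: "integrable (N i) X" and Y: "integrable (N j) Y"
  shows integrable_PiM_inner_components: "integrable (PiM I N) (\<lambda>\<omega>. X (\<omega> i) \<bullet> Y (\<omega> j))"
    and integral_PiM_inner_components:
      "(\<integral>\<omega>. X (\<omega> i) \<bullet> Y (\<omega> j) \<partial>PiM I N) = integral\<^sup>L (N i) X \<bullet> integral\<^sup>L (N j) Y"
proof -
  have coord: "integrable (N i) (\<lambda>z. X z \<bullet> b)" "integrable (N j) (\<lambda>z. Y z \<bullet> b)" for b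
    using X Y by auto
  note mult = integrable_PiM_mult_components[where I = I and N = N, OF P I ij coord]
    integral_PiM_mult_components[where I = I and N = N, OF P I ij coord]
  have coords: "X (\<omega> i) \<bullet> Y (\<omega> j) = (\<Sum>b\<in>Basis. (X (\<omega> i) \<bullet> b) * (Y (\<omega> j) \<bullet> b))" for \<omega>
    by (rule euclidean_inner)
  show "integrable (PiM I N) (\<lambda>\<omega>. X (\<omega> i) \<bullet> Y (\<omega> j))"
    unfolding coords using mult(1) by (rule Bochner_Integration.integrable_sum)
  have "(\<integral>\<omega>. X (\<omega> i) \<bullet> Y (\<omega> j) \<partial>PiM I N)
      = (\<Sum>b\<in>Basis. \<integral>\<omega>. (X (\<omega> i) \<bullet> b) * (Y (\<omega> j) \<bullet> b) \<partial>PiM I N)"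
    unfolding coords using mult(1) by (rule Bochner_Integration.integral_sum)
  also have "\<dots> = (\<Sum>b\<in>Basis. (integral\<^sup>L (N i) X \<bullet> b) * (integral\<^sup>L (N j) Y \<bullet> b))"
    using mult(2) X Y by simp
  also have "\<dots> = integral\<^sup>L (N i) X \<bullet> integral\<^sup>L (N j) Y"
    by (rule euclidean_inner[symmetric])
  finally show "(\<integral>\<omega>. X (\<omega> i) \<bullet> Y (\<omega> j) \<partial>PiM I N) = integral\<^sup>L (N i) X \<bullet> integral\<^sup>L (N j) Y" .
qed

lemma
  fixes X :: "'i \<Rightarrow> 'z \<Rightarrow> 'b::euclidean_space"
  assumes P: "\<And>i. i \<in> I \<Longrightarrow> prob_space (N i)" and I: "finite I"
    and X: "\<And>i. i \<in> I \<Longrightarrow> integrable (N i) (X i)"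
    and X2: "\<And>i. i \<in> I \<Longrightarrow> integrable (N i) (\<lambda>z. (norm (X i z))^2)"
    and mean: "(\<Sum>i\<in>I. integral\<^sup>L (N i) (X i)) = 0"
  shows integrable_PiM_norm_sum_power2: "integrable (PiM I N) (\<lambda>\<omega>. (norm (\<Sum>i\<in>I. X i (\<omega> i)))^2)"
    and integral_PiM_norm_sum_power2_le:
      "(\<integral>\<omega>. (norm (\<Sum>i\<in>I. X i (\<omega> i)))^2 \<partial>PiM I N) \<le> (\<Sum>i\<in>I. \<integral>z. (norm (X i z))^2 \<partial>N i)"
proof -
  define E where "E i = integral\<^sup>L (N i) (X i)" for i
  define A where "A i = (\<integral>z. (norm (X i z))^2 \<partial>N i)" for i
  have expand: "(norm (\<Sum>i\<in>I. X i (\<omega> i)))^2 = (\<Sum>i\<in>I. \<Sum>j\<in>I. X i (\<omega> i) \<bullet> X j (\<omega> j))" for \<omega>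
    by (simp add: power2_norm_eq_inner inner_sum_left inner_sum_right) (rule sum.swap)
  have pair_integrable: "integrable (PiM I N) (\<lambda>\<omega>. X i (\<omega> i) \<bullet> X j (\<omega> j))"
    if ij: "i \<in> I" "j \<in> I" for i j
  proof (cases "i = j")
    case True
    then show ?thesis
      using integrable_PiM_component[where I = I and N = N, OF P ij(1) X2[OF ij(1)]]
      by (simp add: power2_norm_eq_inner)
  next
    case False
    show ?thesis by (rule integrable_PiM_inner_components[where I = I and N = N, OF P I ij False X[OF ij(1)] X[OF ij(2)]])
  qed
  have pair_integral: "(\<integral>\<omega>. X i (\<omega> i) \<bullet> X j (\<omega> j) \<partial>PiM I N) = (if i = j then A i else E i \<bullet> E j)"
    if ij: "i \<in> I" "j \<in> I" for i j
  proof (cases "i = j")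
    case True
    then show ?thesis
      using integral_PiM_component[where I = I and N = N, OF P ij(1) X2[OF ij(1)]]
      by (simp add: A_def power2_norm_eq_inner)
  next
    case False
    then show ?thesis
      using integral_PiM_inner_components[where I = I and N = N, OF P I ij False X[OF ij(1)] X[OF ij(2)]]
      by (simp add: E_def)
  qed
  have row: "integrable (PiM I N) (\<lambda>\<omega>. \<Sum>j\<in>I. X i (\<omega> i) \<bullet> X j (\<omega> j))" if "i \<in> I" for i
    using pair_integrable that by (intro Bochner_Integration.integrable_sum)
  then show "integrable (PiM I N) (\<lambda>\<omega>. (norm (\<Sum>i\<in>I. X i (\<omega> i)))^2)"
    unfolding expand by (rule Bochner_Integration.integrable_sum)
  have "(\<integral>\<omega>. (norm (\<Sum>i\<in>I. X i (\<omega> i)))^2 \<partial>PiM I N)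
      = (\<Sum>i\<in>I. \<integral>\<omega>. (\<Sum>j\<in>I. X i (\<omega> i) \<bullet> X j (\<omega> j)) \<partial>PiM I N)"
    unfolding expand using row by (rule Bochner_Integration.integral_sum)
  also have "\<dots> = (\<Sum>i\<in>I. \<Sum>j\<in>I. (\<integral>\<omega>. X i (\<omega> i) \<bullet> X j (\<omega> j) \<partial>PiM I N))"
  proof (rule sum.cong[OF refl])
    fix i assume "i \<in> I"
    with pair_integrable show "(\<integral>\<omega>. (\<Sum>j\<in>I. X i (\<omega> i) \<bullet> X j (\<omega> j)) \<partial>PiM I N)
        = (\<Sum>j\<in>I. (\<integral>\<omega>. X i (\<omega> i) \<bullet> X j (\<omega> j) \<partial>PiM I N))"
      by (intro Bochner_Integration.integral_sum) blast
  qed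
  also have "\<dots> = (\<Sum>i\<in>I. \<Sum>j\<in>I. if i = j then A i else E i \<bullet> E j)"
    using pair_integral by (intro sum.cong refl) simp
  also have "\<dots> = (\<Sum>i\<in>I. \<Sum>j\<in>I. E i \<bullet> E j) + (\<Sum>i\<in>I. A i - E i \<bullet> E i)"
  proof -
    have "(\<Sum>j\<in>I. if i = j then A i else E i \<bullet> E j) = (\<Sum>j\<in>I. E i \<bullet> E j) + (A i - E i \<bullet> E i)"
      if "i \<in> I" for i
    proof -
      have "(\<Sum>j\<in>I. if i = j then A i else E i \<bullet> E j)
          = (\<Sum>j\<in>I. E i \<bullet> E j + (if i = j then A i - E i \<bullet> E i else 0))"
        by (intro sum.cong) auto
      then show ?thesis using I that by (simp add: sum.distrib)
    qed
    then show ?thesis by (simp add: sum.distrib)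
  qed
  also have "(\<Sum>i\<in>I. \<Sum>j\<in>I. E i \<bullet> E j) = (\<Sum>i\<in>I. E i) \<bullet> (\<Sum>j\<in>I. E j)"
    by (simp add: inner_sum_left inner_sum_right) (rule sum.swap)
  also have "\<dots> = 0" using mean by (simp add: E_def)
  also have "0 + (\<Sum>i\<in>I. A i - E i \<bullet> E i) \<le> (\<Sum>i\<in>I. A i)"
    by (simp add: sum_subtractf sum_nonneg)
  finally show "(\<integral>\<omega>. (norm (\<Sum>i\<in>I. X i (\<omega> i)))^2 \<partial>PiM I N) \<le> (\<Sum>i\<in>I. \<integral>z. (norm (X i z))^2 \<partial>N i)"
    by (simp add: A_def)
qed

section \<open>One step of SAVIC\<close>

lemma norm_avg_grad_power2_le:
  fixes F :: "nat \<Rightarrow> 'a::real_inner \<Rightarrow> real" and Gr :: "nat \<Rightarrow> 'a \<Rightarrow> 'a"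
  assumes M: "0 < M" and sc: "\<And>m. m < M \<Longrightarrow> sc_smooth \<mu> L (F m) (Gr m)"
    and \<mu>: "0 \<le> \<mu>" and L: "0 < L"
  shows "(norm ((1 / real M) *\<^sub>R (\<Sum>m<M. Gr m (x m))))^2
     \<le> 2 * L^2 * ((1 / real M) * (\<Sum>m<M. (norm (x m - y))^2))
       + 8 * L * ((1 / real M) * (\<Sum>m<M. bregman (F m) (Gr m) y z))
       + 4 / (real M)^2 * (norm (\<Sum>m<M. Gr m z))^2"
proof -
  define a where "a = (1 / real M) *\<^sub>R (\<Sum>m<M. Gr m (x m) - Gr m y)"
  define b where "b = (1 / real M) *\<^sub>R (\<Sum>m<M. Gr m y - Gr m z)"
  define c where "c = (1 / real M) *\<^sub>R (\<Sum>m<M. Gr m z)"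
  have decomp: "(1 / real M) *\<^sub>R (\<Sum>m<M. Gr m (x m)) = a + (b + c)"
    by (simp add: a_def b_def c_def sum_subtractf algebra_simps)
  have "(norm (a + (b + c)))^2 \<le> 2 * (norm a)^2 + 4 * (norm b)^2 + 4 * (norm c)^2"
    using norm_add_power2_le[of a "b + c"] norm_add_power2_le[of b c] by linarith
  moreover have "(norm a)^2 \<le> L^2 * ((1 / real M) * (\<Sum>m<M. (norm (x m - y))^2))"
  proof -
    have "(norm a)^2 \<le> (1 / real M) * (\<Sum>m<M. (norm (Gr m (x m) - Gr m y))^2)"
      unfolding a_def by (rule norm_avg_power2_le[OF M])
    also have "\<dots> \<le> (1 / real M) * (\<Sum>m<M. L^2 * (norm (x m - y))^2)"
      using sc_smooth_grad_lipschitz[OF sc \<mu> L] by (intro mult_left_mono sum_mono) auto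
    finally show ?thesis by (simp add: sum_distrib_left)
  qed
  moreover have "(norm b)^2 \<le> 2 * L * ((1 / real M) * (\<Sum>m<M. bregman (F m) (Gr m) y z))"
  proof -
    have "(norm b)^2 \<le> (1 / real M) * (\<Sum>m<M. (norm (Gr m y - Gr m z))^2)"
      unfolding b_def by (rule norm_avg_power2_le[OF M])
    also have "\<dots> \<le> (1 / real M) * (\<Sum>m<M. 2 * L * bregman (F m) (Gr m) y z)"
      using sc_smooth_cocoercive[OF sc \<mu> L] by (intro mult_left_mono sum_mono) auto
    finally show ?thesis by (simp add: sum_distrib_left)
  qed
  moreover have "(norm c)^2 = 1 / (real M)^2 * (norm (\<Sum>m<M. Gr m z))^2"
    by (simp add: c_def power_mult_distrib power_divide)
  ultimately show ?thesis unfolding decomp by linarith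
qed

lemma inner_avg_grad_ge:
  fixes F :: "nat \<Rightarrow> real^'n \<Rightarrow> real" and Gr :: "nat \<Rightarrow> real^'n \<Rightarrow> real^'n"
  assumes M: "0 < M" and sc: "\<And>m. m < M \<Longrightarrow> sc_smooth \<mu> L (F m) (Gr m)" and \<mu>: "0 \<le> \<mu>"
  shows "(1 / real M) * (\<Sum>m<M. F m (avg M x) - F m y) + \<mu> / 2 * (norm (avg M x - y))^2
           - L / 2 * ((1 / real M) * (\<Sum>m<M. (norm (x m - avg M x))^2))
         \<le> (avg M x - y) \<bullet> avg M (\<lambda>m. Gr m (x m))"
proof -
  define xh where "xh = avg M x"
  have client: "F m xh - F m y + \<mu> / 2 * (norm (x m - y))^2 - L / 2 * (norm (x m - xh))^2
      \<le> (xh - y) \<bullet> Gr m (x m)" if "m < M" for m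
  proof -
    have "(xh - y) \<bullet> Gr m (x m) = bregman (F m) (Gr m) y (x m) - bregman (F m) (Gr m) xh (x m) + F m xh - F m y"
      by (simp add: bregman_def inner_diff_left inner_diff_right inner_commute)
    then show ?thesis
      using sc_smooth_bregman_bounds[OF sc[OF that]] by (smt (verit) norm_minus_commute)
  qed
  have "(norm (xh - y))^2 \<le> (1 / real M) * (\<Sum>m<M. (norm (x m - y))^2)"
    using norm_avg_power2_le[OF M, of "\<lambda>m. x m - y"] by (simp add: avg_diff_const[OF M] xh_def)
  then have "\<mu> / 2 * (norm (xh - y))^2 \<le> \<mu> / 2 * ((1 / real M) * (\<Sum>m<M. (norm (x m - y))^2))"
    by (rule mult_left_mono) (use \<mu> in simp)
  moreover have "(1 / real M) * (\<Sum>m<M. F m xh - F m y + \<mu> / 2 * (norm (x m - y))^2 - L / 2 * (norm (x m - xh))^2)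
      \<le> (1 / real M) * (\<Sum>m<M. (xh - y) \<bullet> Gr m (x m))"
    using client by (intro mult_left_mono sum_mono) auto
  moreover have "(1 / real M) * (\<Sum>m<M. (xh - y) \<bullet> Gr m (x m)) = (xh - y) \<bullet> avg M (\<lambda>m. Gr m (x m))"
    by (simp add: avg_def inner_sum_right)
  moreover have "(1 / real M) * (\<Sum>m<M. F m xh - F m y + \<mu> / 2 * (norm (x m - y))^2 - L / 2 * (norm (x m - xh))^2)
      = (1 / real M) * (\<Sum>m<M. F m xh - F m y) + \<mu> / 2 * ((1 / real M) * (\<Sum>m<M. (norm (x m - y))^2))
        - L / 2 * ((1 / real M) * (\<Sum>m<M. (norm (x m - xh))^2))"
    by (simp add: sum.distrib sum_subtractf sum_distrib_left algebra_simps)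
  ultimately show ?thesis unfolding xh_def[symmetric] by linarith
qed

lemma dnorm2_avg_savic_next_le:
  fixes F :: "nat \<Rightarrow> real^'n \<Rightarrow> real" and Gr :: "nat \<Rightarrow> real^'n \<Rightarrow> real^'n"
  assumes M: "0 < M" and sc: "\<And>m. m < M \<Longrightarrow> sc_smooth \<mu> L (F m) (Gr m)"
    and \<mu>: "0 \<le> \<mu>" and L: "0 < L" and \<alpha>: "0 < \<alpha>" and D: "\<And>i. \<alpha> \<le> D $ i"
  shows "dnorm2 D (avg M (savic_next \<gamma> D M sync x (\<lambda>j. Gr j (x j))) - y)
    \<le> dnorm2 D (avg M x - y) - 2 * \<gamma> * ((avg M x - y) \<bullet> avg M (\<lambda>j. Gr j (x j)))
      + \<gamma>^2 / \<alpha> * (2 * L^2 * ((1 / real M) * (\<Sum>m<M. (norm (x m - avg M x))^2))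
         + 8 * L * ((1 / real M) * (\<Sum>m<M. bregman (F m) (Gr m) (avg M x) y))
         + 4 / (real M)^2 * (norm (\<Sum>m<M. Gr m y))^2)"
proof -
  let ?g = "avg M (\<lambda>j. Gr j (x j))"
  have step: "avg M (savic_next \<gamma> D M sync x (\<lambda>j. Gr j (x j))) - y = (avg M x - y) - \<gamma> *\<^sub>R dinv D ?g"
    by (simp add: avg_savic_next[OF M] algebra_simps)
  have "dnorm2 D (avg M (savic_next \<gamma> D M sync x (\<lambda>j. Gr j (x j))) - y)
      \<le> dnorm2 D (avg M x - y) - 2 * \<gamma> * ((avg M x - y) \<bullet> ?g) + \<gamma>^2 / \<alpha> * (norm ?g)^2"
    unfolding step by (rule dnorm2_diff_dinv_le[OF \<alpha> D])
  moreover have "(norm ?g)^2 \<le> 2 * L^2 * ((1 / real M) * (\<Sum>m<M. (norm (x m - avg M x))^2))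
         + 8 * L * ((1 / real M) * (\<Sum>m<M. bregman (F m) (Gr m) (avg M x) y))
         + 4 / (real M)^2 * (norm (\<Sum>m<M. Gr m y))^2"
    unfolding avg_def[of M "\<lambda>j. Gr j (x j)"] by (rule norm_avg_grad_power2_le[OF M sc \<mu> L])
  then have "\<gamma>^2 / \<alpha> * (norm ?g)^2 \<le> \<gamma>^2 / \<alpha> * (2 * L^2 * ((1 / real M) * (\<Sum>m<M. (norm (x m - avg M x))^2))
         + 8 * L * ((1 / real M) * (\<Sum>m<M. bregman (F m) (Gr m) (avg M x) y))
         + 4 / (real M)^2 * (norm (\<Sum>m<M. Gr m y))^2)"
    using \<alpha> by (intro mult_left_mono) auto
  ultimately show ?thesis by linarith
qed

lemma expected_dnorm2_avg_savic_next_le: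
  fixes Dist :: "nat \<Rightarrow> 'z measure" and fz :: "nat \<Rightarrow> 'z \<Rightarrow> real^'n \<Rightarrow> real"
    and gz :: "nat \<Rightarrow> 'z \<Rightarrow> real^'n \<Rightarrow> real^'n"
    and fm :: "nat \<Rightarrow> real^'n \<Rightarrow> real" and Gm :: "nat \<Rightarrow> real^'n \<Rightarrow> real^'n"
  assumes M: "0 < M" and prob: "\<And>m. m < M \<Longrightarrow> prob_space (Dist m)"
    and int_f: "\<And>m x. m < M \<Longrightarrow> integrable (Dist m) (\<lambda>z. fz m z x)"
    and int_g2: "\<And>m x. m < M \<Longrightarrow> integrable (Dist m) (\<lambda>z. (norm (gz m z x))^2)"
    and fm_exp: "\<And>m x. m < M \<Longrightarrow> fm m x = (\<integral>z. fz m z x \<partial>Dist m)"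
    and unbiased: "\<And>m x. m < M \<Longrightarrow> integrable (Dist m) (\<lambda>z. gz m z x) \<and> (\<integral>z. gz m z x \<partial>Dist m) = Gm m x"
    and fz_sc: "\<And>m. m < M \<Longrightarrow> AE z in Dist m. sc_smooth \<mu> L (fz m z) (gz m z)"
    and grad0: "(\<Sum>m<M. Gm m y) = 0"
    and \<mu>: "0 \<le> \<mu>" and L: "0 < L" and \<alpha>: "0 < \<alpha>" and D: "\<And>i. \<alpha> \<le> D $ i"
  shows "(\<integral>\<omega>. dnorm2 D (avg M (savic_next \<gamma> D M sync x (\<lambda>j. gz j (\<omega> j) (x j))) - y) \<partial>PiM {..<M} Dist)
    \<le> dnorm2 D (avg M x - y) - 2 * \<gamma> * ((avg M x - y) \<bullet> avg M (\<lambda>j. Gm j (x j)))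
      + \<gamma>^2 / \<alpha> * (2 * L^2 * ((1 / real M) * (\<Sum>m<M. (norm (x m - avg M x))^2))
         + 8 * L * ((1 / real M) * (\<Sum>m<M. bregman (fm m) (Gm m) (avg M x) y))
         + 4 / (real M)^2 * (\<Sum>m<M. \<integral>z. (norm (gz m z y))^2 \<partial>Dist m))"
    (is "(\<integral>\<omega>. ?Z \<omega> \<partial>?P) \<le> ?A - 2 * \<gamma> * ?C + \<gamma>^2 / \<alpha> * (2 * L^2 * ?S + 8 * L * ?B + 4 / (real M)^2 * ?W)")
proof -
  have Dist_prob: "\<And>m. m \<in> {..<M} \<Longrightarrow> prob_space (Dist m)" using prob by blast
  interpret P: prob_space ?P by (rule prob_space_PiM[OF Dist_prob])
  define C where "C \<omega> = (1 / real M) * (\<Sum>m<M. (avg M x - y) \<bullet> gz m (\<omega> m) (x m))" for \<omega>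
  define B where "B \<omega> = (1 / real M) * (\<Sum>m<M. bregman (fz m (\<omega> m)) (gz m (\<omega> m)) (avg M x) y)" for \<omega>
  define W where "W \<omega> = (norm (\<Sum>m<M. gz m (\<omega> m) y))^2" for \<omega>
  define R where "R \<omega> = ?A - 2 * \<gamma> * C \<omega> + \<gamma>^2 / \<alpha> * (2 * L^2 * ?S + 8 * L * B \<omega> + 4 / (real M)^2 * W \<omega>)"
    for \<omega>
  have "AE \<omega> in ?P. \<forall>m\<in>{..<M}. sc_smooth \<mu> L (fz m (\<omega> m)) (gz m (\<omega> m))"
    using AE_PiM_component[where I = "{..<M}" and M = Dist, OF Dist_prob] fz_sc
    by (intro eventually_ball_finite) auto
  then have Z_le_R: "AE \<omega> in ?P. ?Z \<omega> \<le> R \<omega>"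
  proof eventually_elim
    case (elim \<omega>)
    then show ?case
      using dnorm2_avg_savic_next_le[OF M _ \<mu> L \<alpha> D, of "\<lambda>m. fz m (\<omega> m)" "\<lambda>m. gz m (\<omega> m)"]
      by (simp add: R_def C_def B_def W_def avg_def inner_sum_right)
  qed
  have Z_nonneg: "0 \<le> ?Z \<omega>" for \<omega>
    using dnorm2_ge[OF D] \<alpha> by (meson mult_nonneg_nonneg less_imp_le zero_le_power2 order_trans)
  have R_nonneg: "AE \<omega> in ?P. 0 \<le> R \<omega>"
    using Z_le_R by eventually_elim (rule order_trans[OF Z_nonneg])
  have C_int: "integrable (Dist m) (\<lambda>z. (avg M x - y) \<bullet> gz m z (x m))"
    and B_int: "integrable (Dist m) (\<lambda>z. bregman (fz m z) (gz m z) (avg M x) y)"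
    if "m \<in> {..<M}" for m
    using int_f unbiased that by (auto simp: bregman_def)
  have C: "integrable ?P C" "(\<integral>\<omega>. C \<omega> \<partial>?P) = ?C"
    using integrable_PiM_sum_components[where I = "{..<M}" and N = Dist, OF Dist_prob finite_lessThan C_int]
      integral_PiM_sum_components[where I = "{..<M}" and N = Dist, OF Dist_prob finite_lessThan C_int]
      unbiased
    by (simp_all add: C_def[abs_def] avg_def inner_sum_right)
  have B: "integrable ?P B" "(\<integral>\<omega>. B \<omega> \<partial>?P) = ?B"
    using integrable_PiM_sum_components[where I = "{..<M}" and N = Dist, OF Dist_prob finite_lessThan B_int]
      integral_PiM_sum_components[where I = "{..<M}" and N = Dist, OF Dist_prob finite_lessThan B_int]
      int_f unbiased fm_exp
    by (simp_all add: B_def[abs_def] bregman_def)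
  have "integrable (Dist m) (\<lambda>z. gz m z y)" "integrable (Dist m) (\<lambda>z. (norm (gz m z y))^2)"
    if "m \<in> {..<M}" for m
    using that unbiased int_g2 by auto
  moreover have "(\<Sum>m<M. \<integral>z. gz m z y \<partial>Dist m) = 0"
    using unbiased grad0 by simp
  ultimately have W: "integrable ?P W" "(\<integral>\<omega>. W \<omega> \<partial>?P) \<le> ?W"
    unfolding W_def[abs_def]
    by (intro integrable_PiM_norm_sum_power2[where I = "{..<M}" and N = Dist, OF Dist_prob]
        integral_PiM_norm_sum_power2_le[where I = "{..<M}" and N = Dist, OF Dist_prob]; simp)+
  have "(\<integral>\<omega>. ?Z \<omega> \<partial>?P) \<le> (\<integral>\<omega>. R \<omega> \<partial>?P)"
    using C(1) B(1) W(1) Z_le_R R_nonneg by (intro integral_mono_AE') (simp_all add: R_def)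
  also have "\<dots> = ?A - 2 * \<gamma> * ?C + \<gamma>^2 / \<alpha> * (2 * L^2 * ?S + 8 * L * ?B + 4 / (real M)^2 * (\<integral>\<omega>. W \<omega> \<partial>?P))"
    using C B W(1) by (simp add: R_def P.prob_space)
  also have "\<dots> \<le> ?A - 2 * \<gamma> * ?C + \<gamma>^2 / \<alpha> * (2 * L^2 * ?S + 8 * L * ?B + 4 / (real M)^2 * ?W)"
    using W(2) \<alpha> by (intro add_left_mono mult_left_mono) auto
  finally show ?thesis .
qed

lemma one_step_bound_collect:
  fixes E A c B S V n W \<sigma> \<gamma> \<mu> \<Gamma> L \<alpha> Mr :: real
  assumes E: "E \<le> A - 2 * \<gamma> * c + \<gamma>^2 / \<alpha> * (2 * L^2 * S + 8 * L * B + 4 / Mr^2 * W)"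
    and c: "B + \<mu> / 2 * n - L / 2 * S \<le> c" and A: "A \<le> \<Gamma> * n"
    and SV: "\<alpha> * S \<le> V" and W: "W = Mr * \<sigma>"
    and \<gamma>: "0 \<le> \<gamma>" and \<mu>: "0 \<le> \<mu>" and L: "0 \<le> L" and \<alpha>: "0 < \<alpha>" and \<Gamma>: "0 < \<Gamma>" and Mr: "0 < Mr"
  shows "E \<le> (1 - \<gamma> * \<mu> / \<Gamma>) * A + \<gamma> * L / \<alpha> * (1 + 2 * \<gamma> * L / \<alpha>) * V
       - 2 * \<gamma> * (1 - 4 * \<gamma> * L / \<alpha>) * B + 4 * \<gamma>^2 * \<sigma> / (Mr * \<alpha>)"
proof -
  have "2 * \<gamma> * (B + \<mu> / 2 * n - L / 2 * S) \<le> 2 * \<gamma> * c"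
    using c \<gamma> by (intro mult_left_mono) auto
  moreover have "\<gamma> * \<mu> * (A / \<Gamma>) \<le> \<gamma> * \<mu> * n"
    using A \<Gamma> \<gamma> \<mu> by (intro mult_left_mono) (auto simp: field_simps)
  moreover have S: "S \<le> V / \<alpha>" using SV \<alpha> by (simp add: field_simps)
  then have "\<gamma> * L * S \<le> \<gamma> * L * (V / \<alpha>)"
    by (rule mult_left_mono) (use \<gamma> L in simp)
  moreover have "\<gamma>^2 / \<alpha> * (2 * L^2) * S \<le> \<gamma>^2 / \<alpha> * (2 * L^2) * (V / \<alpha>)"
    using S by (rule mult_left_mono) (use \<alpha> in simp)
  moreover have "\<gamma>^2 / \<alpha> * (4 / Mr^2 * W) = 4 * \<gamma>^2 * \<sigma> / (Mr * \<alpha>)"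
    using W Mr by (simp add: field_simps power2_eq_square)
  moreover have "(1 - \<gamma> * \<mu> / \<Gamma>) * A + \<gamma> * L / \<alpha> * (1 + 2 * \<gamma> * L / \<alpha>) * V
       - 2 * \<gamma> * (1 - 4 * \<gamma> * L / \<alpha>) * B
     = A - \<gamma> * \<mu> * (A / \<Gamma>) + \<gamma> * L * (V / \<alpha>) + \<gamma>^2 / \<alpha> * (2 * L^2) * (V / \<alpha>)
       - 2 * \<gamma> * B + \<gamma>^2 / \<alpha> * (8 * L) * B"
    using \<alpha> by (simp add: field_simps power2_eq_square)
  ultimately show ?thesis using E by (simp add: algebra_simps)
qed

lemma one_step_bound_small_stepsize:
  fixes V B \<gamma> L \<alpha> :: real
  assumes \<gamma>: "0 \<le> \<gamma>" "\<gamma> \<le> \<alpha> / (8 * L)" and \<alpha>: "0 < \<alpha>" and L: "0 < L"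
    and V: "0 \<le> V" and B: "0 \<le> B"
  shows "\<gamma> * L / \<alpha> * (1 + 2 * \<gamma> * L / \<alpha>) * V - 2 * \<gamma> * (1 - 4 * \<gamma> * L / \<alpha>) * B
     \<le> 5 * \<gamma> * L / (4 * \<alpha>) * V - \<gamma> * B"
proof -
  define k where "k = \<gamma> * L / \<alpha>"
  have k: "0 \<le> k" "k \<le> 1 / 8" using \<gamma> \<alpha> L by (simp_all add: k_def field_simps)
  have "k * (2 * k) \<le> k * (1 / 4)"
    using k by (intro mult_left_mono) auto
  then have "k * (1 + 2 * k) * V \<le> 5 / 4 * k * V"
    using V by (intro mult_right_mono) (auto simp: algebra_simps)
  moreover have "\<gamma> * (8 * k) \<le> \<gamma> * 1"
    using k \<gamma> by (intro mult_left_mono) auto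
  then have "\<gamma> * B \<le> 2 * \<gamma> * (1 - 4 * k) * B"
    using B by (intro mult_right_mono) (auto simp: algebra_simps)
  ultimately show ?thesis by (simp add: k_def field_simps)
qed

theorem lemma8:
  fixes M :: nat and \<mu> L \<alpha> \<Gamma> \<gamma> :: real
    and Dist :: "nat \<Rightarrow> 'z measure"
    and fz :: "nat \<Rightarrow> 'z \<Rightarrow> real^'n \<Rightarrow> real" and gz :: "nat \<Rightarrow> 'z \<Rightarrow> real^'n \<Rightarrow> real^'n"
    and fm :: "nat \<Rightarrow> real^'n \<Rightarrow> real" and Gm :: "nat \<Rightarrow> real^'n \<Rightarrow> real^'n"
    and xstar :: "real^'n"
    and sq :: bool and \<beta> :: "nat \<Rightarrow> real" and D0 :: "real^'n" and H :: "nat \<Rightarrow> real^'n"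
    and tp :: "nat \<Rightarrow> nat" and p t :: nat
    and xs :: "nat \<Rightarrow> real^'n"
  defines "Dh \<equiv> clip \<alpha> (precond sq \<beta> D0 H (tp p))"
      and "xh \<equiv> avg M xs"
      and "V \<equiv> (1 / real M) * (\<Sum>m<M. dnorm2 (clip \<alpha> (precond sq \<beta> D0 H (tp p))) (xs m - avg M xs))"
      and "sigma2 \<equiv> (1 / real M) * (\<Sum>m<M. \<integral>z. (norm (gz m z xstar))^2 \<partial>Dist m)"
      and "Df \<equiv> (1 / real M) * (\<Sum>m<M. fm m (avg M xs)) - (1 / real M) * (\<Sum>m<M. fm m xstar)
               - ((1 / real M) *\<^sub>R (\<Sum>m<M. Gm m xstar)) \<bullet> (avg M xs - xstar)"
  assumes M2: "M \<ge> 2"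
    and prob: "\<And>m. m < M \<Longrightarrow> prob_space (Dist m)"
    and meas_f: "\<And>m x. m < M \<Longrightarrow> (\<lambda>z. fz m z x) \<in> borel_measurable (Dist m)"
    and meas_g: "\<And>m x. m < M \<Longrightarrow> (\<lambda>z. gz m z x) \<in> borel_measurable (Dist m)"
    and int_f: "\<And>m x. m < M \<Longrightarrow> integrable (Dist m) (\<lambda>z. fz m z x)"
    and int_g2: "\<And>m x. m < M \<Longrightarrow> integrable (Dist m) (\<lambda>z. (norm (gz m z x))^2)"
    and fm_exp: "\<And>m x. m < M \<Longrightarrow> fm m x = (\<integral>z. fz m z x \<partial>Dist m)"
    and unbiased: "\<And>m x. m < M \<Longrightarrow> integrable (Dist m) (\<lambda>z. gz m z x) \<and> (\<integral>z. gz m z x \<partial>Dist m) = Gm m x"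
    and mu_pos: "0 < \<mu>"
    and fm_sc: "\<And>m. m < M \<Longrightarrow> sc_smooth \<mu> L (fm m) (Gm m)"
    and fz_sc: "\<And>m. m < M \<Longrightarrow> AE z in Dist m. sc_smooth \<mu> L (fz m z) (gz m z)"
    and xstar_min: "\<And>x. (\<Sum>m<M. fm m xstar) / real M \<le> (\<Sum>m<M. fm m x) / real M"
    and alpha_pos: "0 < \<alpha>" and alpha_Gamma: "\<alpha> \<le> \<Gamma>"
    and D0_bd: "\<And>i. \<alpha> \<le> D0 $ i \<and> D0 $ i \<le> \<Gamma>"
    and H_bd: "\<And>s i. \<alpha> \<le> H s $ i \<and> H s $ i \<le> \<Gamma>"
    and beta_bd: "\<And>s. 0 \<le> \<beta> s \<and> \<beta> s \<le> 1"
    and tp0: "tp 0 = 0" and tp_mono: "strict_mono tp"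
    and t_in: "tp p \<le> t" "t < tp (Suc p)"
    and gamma_nonneg: "0 \<le> \<gamma>"
  shows "(\<integral>\<omega>. dnorm2 Dh (avg M (savic_next \<gamma> Dh M (t = tp p) xs (\<lambda>j. gz j (\<omega> j) (xs j))) - xstar)
              \<partial>(PiM {..<M} Dist))
         \<le> (1 - \<gamma> * \<mu> / \<Gamma>) * dnorm2 Dh (xh - xstar)
           + \<gamma> * L / \<alpha> * (1 + 2 * \<gamma> * L / \<alpha>) * V
           - 2 * \<gamma> * (1 - 4 * \<gamma> * L / \<alpha>) * Df
           + 4 * \<gamma>^2 * sigma2 / (real M * \<alpha>)
       \<and> (\<gamma> \<le> \<alpha> / (8 * L) \<longrightarrow>
          (\<integral>\<omega>. dnorm2 Dh (avg M (savic_next \<gamma> Dh M (t = tp p) xs (\<lambda>j. gz j (\<omega> j) (xs j))) - xstar)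
              \<partial>(PiM {..<M} Dist))
         \<le> (1 - \<gamma> * \<mu> / \<Gamma>) * dnorm2 Dh (xh - xstar)
           + 5 * \<gamma> * L / (4 * \<alpha>) * V
           - \<gamma> * Df
           + 4 * \<gamma>^2 * sigma2 / (real M * \<alpha>))"
proof -
  have M: "0 < M" using M2 by simp
  have \<Gamma>: "0 < \<Gamma>" using alpha_pos alpha_Gamma by linarith
  have \<mu>: "0 \<le> \<mu>" using mu_pos by simp
  have L: "0 < L" using sc_smooth_modulus_le[OF fm_sc[OF M]] mu_pos by linarith
  have Dh_eq: "Dh = precond sq \<beta> D0 H (tp p)"
    unfolding Dh_def using alpha_pos by (intro clip_precond[OF _ D0_bd H_bd beta_bd]) simp
  have Dh_ge: "\<And>i. \<alpha> \<le> Dh $ i" and Dh_le: "\<And>i. Dh $ i \<le> \<Gamma>"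
    unfolding Dh_eq using precond_bounds[OF _ D0_bd H_bd beta_bd] alpha_pos by simp_all
  have grad0: "(\<Sum>m<M. Gm m xstar) = 0"
  proof (rule sum_grad_eq_0_at_minimizer[OF fm_sc L M])
    show "(\<Sum>m<M. fm m xstar) \<le> (\<Sum>m<M. fm m x)" for x
      using xstar_min[of x] M by (simp add: divide_le_cancel)
  qed
  have Df_bregman: "Df = (1 / real M) * (\<Sum>m<M. bregman (fm m) (Gm m) xh xstar)"
    by (simp add: Df_def xh_def bregman_def sum_subtractf inner_sum_left right_diff_distrib)
  have Df_gap: "Df = (1 / real M) * (\<Sum>m<M. fm m xh - fm m xstar)"
    using grad0 by (simp add: Df_def xh_def sum_subtractf right_diff_distrib)
  have consensus: "\<alpha> * ((1 / real M) * (\<Sum>m<M. (norm (xs m - xh))^2)) \<le> V"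
    using avg_dnorm2_ge[OF Dh_ge, of M "\<lambda>m. xs m - xh"] by (simp add: V_def Dh_def xh_def)
  have sigma: "(\<Sum>m<M. \<integral>z. (norm (gz m z xstar))^2 \<partial>Dist m) = real M * sigma2"
    using M by (simp add: sigma2_def)
  note step = expected_dnorm2_avg_savic_next_le[where Dist = Dist and fz = fz and gz = gz and fm = fm
      and Gm = Gm and M = M and \<mu> = \<mu> and L = L,
      OF M prob int_f int_g2 fm_exp unbiased fz_sc grad0 \<mu> L alpha_pos Dh_ge,
      where \<gamma> = \<gamma> and sync = "t = tp p" and x = xs, folded xh_def, folded Df_bregman]
  note cross = inner_avg_grad_ge[where F = fm and Gr = Gm and M = M, OF M fm_sc \<mu>,
      where x = xs and y = xstar, folded xh_def, folded Df_gap]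
  let ?E = "\<integral>\<omega>. dnorm2 Dh (avg M (savic_next \<gamma> Dh M (t = tp p) xs (\<lambda>j. gz j (\<omega> j) (xs j))) - xstar)
      \<partial>PiM {..<M} Dist"
  have first: "?E \<le> (1 - \<gamma> * \<mu> / \<Gamma>) * dnorm2 Dh (xh - xstar) + \<gamma> * L / \<alpha> * (1 + 2 * \<gamma> * L / \<alpha>) * V
      - 2 * \<gamma> * (1 - 4 * \<gamma> * L / \<alpha>) * Df + 4 * \<gamma>^2 * sigma2 / (real M * \<alpha>)"
    by (rule one_step_bound_collect[OF step cross dnorm2_le[OF Dh_le] consensus sigma gamma_nonneg
          \<mu> less_imp_le[OF L] alpha_pos \<Gamma>]) (use M in auto)
  have "0 \<le> V"
    by (rule order_trans[OF _ consensus]) (use alpha_pos in \<open>simp add: sum_nonneg\<close>)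
  moreover have "0 \<le> Df"
    unfolding Df_bregman using fm_sc \<mu>
    by (intro mult_nonneg_nonneg sum_nonneg) (auto intro: sc_smooth_bregman_nonneg)
  ultimately have "?E \<le> (1 - \<gamma> * \<mu> / \<Gamma>) * dnorm2 Dh (xh - xstar) + 5 * \<gamma> * L / (4 * \<alpha>) * V
      - \<gamma> * Df + 4 * \<gamma>^2 * sigma2 / (real M * \<alpha>)" if "\<gamma> \<le> \<alpha> / (8 * L)"
    using first one_step_bound_small_stepsize[OF gamma_nonneg that alpha_pos L] by fastforce
  with first show ?thesis by blast
qed
end
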